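(* For all integers $t\ge k$ and all $i$ with $0\le i\le\rho(m)-1$, \[ \mu_i\;\le\;\sum_{j=1}^{k} x^{\alpha_i}(t-j)\;\le\;1+\mu_i . \]
   Context: For $u\in\mathbb{R}$ let $\mathbf 1[u]=1$ if $u\ge 0$ and $\mathbf 1[u]=0$ if $u<0$. Let $m$ be a positive integer and let $\rho(m)$ denote the number of primes $p$ with $2m<p<3m$; assume $\rho(m)\ge 2$. List these primes as $p_0>p_1>\dots>p_{\rho(m)-1}$ and put $\alpha_i=3m-p_i$. Let $k=(6m-1)\rho(m)$, $\mu_i=\lfloor k/p_i\rfloor$, $\beta_i=k-p_i\mu_i$. Define weights $\bar a_j$, $1\le j\le k$: if $\rho(m)$ is even, $\bar a_j=2$ if $j=\ell p_i$ for some $i$ and some $\ell$ with $1\le \ell\le 3\rho(m)/2$, $\bar a_j=-2$ if $j=\ell p_i$ with $3\rho(m)/2<\ell\le 2\rho(m)$, and $\bar a_j=0$ otherwise; if $\rho(m)$ is odd, $\bar a_j=2$ if $j=\ell p_i$ with $1\le\ell\le (3\rho(m)-1)/2$, $\bar a_j=-2$ if $j=\ell p_i$ with $(3\rho(m)+1)/2\le \ell\le 2\rho(m)-2$, $\bar a_j=-1$ if $j=\ell p_i$ with $\ell\in\{2\rho(m)-1,2\rho(m)\}$, and $\bar a_j=0$ otherwise (well defined since the sets $\{\ell p_i:1\le\ell\le2\rho(m)\}$ are pairwise disjoint). Let $\bar\theta=2\rho(m)$. For each $i$ define $x^{\alpha_i}(t)$ for $0\le t\le k-1$ by $x^{\alpha_i}(t)=1$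 if $t=\beta_i+\ell p_i$ for some $0\le \ell\le\mu_i-1$ and $x^{\alpha_i}(t)=0$ otherwise, and for $t\ge k$ by $x^{\alpha_i}(t)=\mathbf 1\big[\sum_{j=1}^k \bar a_j x^{\alpha_i}(t-j)-\bar\theta\big]$. *)

theory Defs
  imports "HOL-Computational_Algebra.Primes"
begin

definition primes_between :: "nat \<Rightarrow> nat set" where
  "primes_between m = {p. prime p \<and> 2*m < p \<and> p < 3*m}"

definition rho :: "nat \<Rightarrow> nat" where
  "rho m = card (primes_between m)"

definition pr :: "nat \<Rightarrow> nat \<Rightarrow> nat" where
  "pr m i = rev (sorted_list_of_set (primes_between m)) ! i"

definition alpha :: "nat \<Rightarrow> nat \<Rightarrow> nat" where
  "alpha m i = 3*m - pr m i"

definition kk :: "nat \<Rightarrow> nat" where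
  "kk m = (6*m - 1) * rho m"

definition mu :: "nat \<Rightarrow> nat \<Rightarrow> nat" where
  "mu m i = kk m div pr m i"

definition beta :: "nat \<Rightarrow> nat \<Rightarrow> nat" where
  "beta m i = kk m - pr m i * mu m i"

definition mult_in :: "nat \<Rightarrow> nat \<Rightarrow> nat \<Rightarrow> nat \<Rightarrow> bool" where
  "mult_in m j lo hi = (\<exists>i<rho m. \<exists>l. lo \<le> l \<and> l \<le> hi \<and> j = l * pr m i)"

definition abar :: "nat \<Rightarrow> nat \<Rightarrow> int" where
  "abar m j =
    (if even (rho m) then
       (if mult_in m j 1 (3 * rho m div 2) then 2
        else if mult_in m j (3 * rho m div 2 + 1) (2 * rho m) then -2
        else 0)
     else
       (if mult_in m j 1 ((3 * rho m - 1) div 2) then 2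
        else if mult_in m j ((3 * rho m + 1) div 2) (2 * rho m - 2) then -2
        else if mult_in m j (2 * rho m - 1) (2 * rho m) then -1
        else 0))"

definition theta_bar :: "nat \<Rightarrow> int" where
  "theta_bar m = 2 * int (rho m)"

definition step :: "int \<Rightarrow> int" where
  "step u = (if u \<ge> 0 then 1 else 0)"

function xa :: "nat \<Rightarrow> nat \<Rightarrow> nat \<Rightarrow> int" where
  "xa m i t =
    (if t < kk m then
       (if (\<exists>l. l \<le> mu m i - 1 \<and> mu m i \<ge> 1 \<and> t = beta m i + l * pr m i) then 1 else 0)
     else step ((\<Sum>j = 1..kk m. abar m j * xa m i (t - j)) - theta_bar m))"
  by pat_completeness auto
termination
  by (relation "measure (\<lambda>(m, i, t). t)") auto

end

theory Submission
  imports Defs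
begin

(*
  The network x^{alpha_i} is nothing but the indicator of one residue class:
  we show  x^{alpha_i}(t) = [t mod p_i = beta_i]  for all t.  The initial
  segment t < k is exactly this indicator by definition; for t >= k we argue by
  strong induction that, if the past is the indicator of  beta (mod p), the
  weighted field  sum_j abar_j x(t-j)  equals the threshold 2 rho(m) precisely
  when t == beta (mod p), and is smaller otherwise.  The field splits into blocks
  indexed by the primes q in (2m,3m): the block of q = p contributes
  [t == beta] * sum_l w_l = 2 rho(m) [t == beta], while every block of a prime
  q <> p hits the residue class at most once (the times t - l q, 0 <= l <= 2 rho(m),
  are pairwise incongruent mod p since 2 rho(m) < p), contributing at most 2 and nothing when t == beta.
  Once x is periodic, the window sum over k consecutive times counts the members
  of a residue class in an interval of length k = mu_i p_i + beta_i, which is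
  mu_i or mu_i + 1.
*)

(* The recursion equation of xa would unfold forever under the simplifier. *)
declare xa.simps[simp del]

section \<open>The primes between 2m and 3m\<close>

lemma finite_primes_between: "finite (primes_between m)"
  unfolding primes_between_def by (rule finite_subset[of _ "{..<3*m}"]) auto

lemma primes_between_prime: "q \<in> primes_between m \<Longrightarrow> prime q"
  unfolding primes_between_def by auto

text \<open>There are fewer than m candidates, so every such prime exceeds 2 rho(m);
  this is what makes the multiples l q, l <= 2 rho(m), well separated.\<close>
lemma double_rho_less_prime:
  assumes "q \<in> primes_between m"
  shows "2 * rho m < q"
proof -
  have "primes_between m \<subseteq> {2*m+1..<3*m}" unfolding primes_between_def by auto
  hence "rho m \<le> m - 1" unfolding rho_def using card_mono[of "{2*m+1..<3*m}"] by fastforce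
  thus ?thesis using assms unfolding primes_between_def by auto
qed

lemma multiples_within_memory:
  assumes "q \<in> primes_between m"
  shows "2 * rho m * q \<le> kk m"
proof -
  have "q < 3*m" using assms unfolding primes_between_def by simp
  hence "2*q \<le> 6*m - 1" by linarith
  hence "rho m * (2*q) \<le> rho m * (6*m - 1)" by (rule mult_le_mono2)
  thus ?thesis unfolding kk_def by (simp add: algebra_simps)
qed

lemma pr_in_primes_between:
  assumes "i < rho m"
  shows "pr m i \<in> primes_between m"
proof -
  let ?xs = "rev (sorted_list_of_set (primes_between m))"
  have "length ?xs = rho m" unfolding rho_def by simp
  hence "?xs ! i \<in> set ?xs" using assms by (intro nth_mem) simp
  thus ?thesis unfolding pr_def using finite_primes_between by simp
qed

lemma pr_onto_primes_between:
  assumes "q \<in> primes_between m"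
  shows "\<exists>i<rho m. pr m i = q"
proof -
  let ?xs = "rev (sorted_list_of_set (primes_between m))"
  have "q \<in> set ?xs" using assms finite_primes_between by simp
  then obtain i where "i < length ?xs" "?xs ! i = q" unfolding in_set_conv_nth by blast
  moreover have "length ?xs = rho m" unfolding rho_def by simp
  ultimately show ?thesis unfolding pr_def by auto
qed

lemma mult_in_iff:
  "mult_in m j lo hi \<longleftrightarrow> (\<exists>q\<in>primes_between m. \<exists>l. lo \<le> l \<and> l \<le> hi \<and> j = l * q)"
  unfolding mult_in_def using pr_in_primes_between pr_onto_primes_between by metis

text \<open>A positive multiple l q of a prime q with cofactor smaller than q determines
  both q and l; this is why the sets of multiples in the definition of abar are
  disjoint.\<close>
lemma small_multiple_unique:
  fixes q q' l l' :: nat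
  assumes "prime q" "prime q'" "0 < l" "l' < q" and eq: "l * q = l' * q'"
  shows "q = q' \<and> l = l'"
proof (cases "q = q'")
  case True
  with eq \<open>prime q\<close> show ?thesis by (simp add: prime_gt_0_nat)
next
  case False
  have "0 < l'" using eq \<open>0 < l\<close> \<open>prime q\<close> by (metis mult_is_0 neq0_conv not_prime_0)
  have "q dvd l' * q'" using eq by (metis dvd_triv_right)
  moreover have "\<not> q dvd q'" using assms False primes_dvd_imp_eq by blast
  ultimately have "q dvd l'" using \<open>prime q\<close> prime_dvd_mult_iff by blast
  hence "q \<le> l'" using \<open>0 < l'\<close> by (rule dvd_imp_le)
  with \<open>l' < q\<close> show ?thesis by simp
qed

section \<open>The weights abar\<close>

text \<open>The weight attached to the l-th multiple of every prime q in (2m,3m):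
  abar (l q) = level_weight m l for 1 <= l <= 2 rho(m).\<close>
definition level_weight :: "nat \<Rightarrow> nat \<Rightarrow> int" where
  "level_weight m l =
    (if even (rho m) then
       (if 1 \<le> l \<and> l \<le> 3 * rho m div 2 then 2
        else if 3 * rho m div 2 + 1 \<le> l \<and> l \<le> 2 * rho m then -2 else 0)
     else
       (if 1 \<le> l \<and> l \<le> (3 * rho m - 1) div 2 then 2
        else if (3 * rho m + 1) div 2 \<le> l \<and> l \<le> 2 * rho m - 2 then -2
        else if 2 * rho m - 1 \<le> l \<and> l \<le> 2 * rho m then -1
        else 0))"

lemma abar_ranges:
  assumes "rho m \<ge> 1"
  shows "3 * rho m div 2 \<le> 2 * rho m" "1 \<le> (3 * rho m + 1) div 2"
    "(3 * rho m - 1) div 2 \<le> 2 * rho m" "1 \<le> 2 * rho m - 1"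
  using assms by simp_all

lemma abar_multiple:
  assumes q: "q \<in> primes_between m" and l: "1 \<le> l" "l \<le> 2 * rho m" and rho: "rho m \<ge> 1"
  shows "abar m (l * q) = level_weight m l"
proof -
  have range: "mult_in m (l * q) lo hi \<longleftrightarrow> lo \<le> l \<and> l \<le> hi"
    if "1 \<le> lo" "hi \<le> 2 * rho m" for lo hi
  proof
    assume "mult_in m (l * q) lo hi"
    then obtain q' l' where q': "q' \<in> primes_between m" "lo \<le> l'" "l' \<le> hi" "l * q = l' * q'"
      by (auto simp: mult_in_iff)
    have "l' < q" using q' that double_rho_less_prime[OF q] by linarith
    hence "l = l'" using small_multiple_unique[OF primes_between_prime[OF q]
        primes_between_prime[OF q'(1)] _ \<open>l' < q\<close> q'(4)] l by simp
    with q' show "lo \<le> l \<and> l \<le> hi" by simp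
  next
    assume "lo \<le> l \<and> l \<le> hi"
    thus "mult_in m (l * q) lo hi" using q by (auto simp: mult_in_iff)
  qed
  show ?thesis unfolding abar_def level_weight_def
    by (simp only: range abar_ranges[OF rho] order_refl diff_le_self le_add2)
qed

lemma abar_non_multiple:
  assumes j: "\<not> (\<exists>q\<in>primes_between m. \<exists>l. 1 \<le> l \<and> l \<le> 2 * rho m \<and> j = l * q)"
    and rho: "rho m \<ge> 1"
  shows "abar m j = 0"
proof -
  have range: "\<not> mult_in m j lo hi" if "1 \<le> lo" "hi \<le> 2 * rho m" for lo hi
    using j that unfolding mult_in_iff by (meson order_trans)
  show ?thesis unfolding abar_def
    by (simp only: range abar_ranges[OF rho] order_refl diff_le_self le_add2 if_False if_cancel)
qed

lemma level_weight_le_2: "level_weight m l \<le> 2"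
  unfolding level_weight_def by auto

lemma level_weight_sum:
  assumes "rho m \<ge> 2"
  shows "(\<Sum>l = 1..2 * rho m. level_weight m l) = 2 * int (rho m)"
proof (cases "even (rho m)")
  case True
  then obtain r where r: "rho m = 2 * r" by auto
  have "(\<Sum>l = 1..2 * rho m. level_weight m l)
      = (\<Sum>l = 1..3 * r. level_weight m l) + (\<Sum>l = 3 * r + 1..3 * r + r. level_weight m l)"
    using sum.ub_add_nat[of 1 "3 * r" "level_weight m" r] r by simp
  also have "\<dots> = (\<Sum>l = 1..3 * r. 2) + (\<Sum>l = 3 * r + 1..3 * r + r. -2)"
    by (intro arg_cong2[where f = "(+)"] sum.cong) (auto simp: level_weight_def r)
  finally show ?thesis using r by simp
next
  case False
  then obtain r where r: "rho m = 2 * r + 1" using oddE by blast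
  with assms have "r \<ge> 1" by simp
  have "(\<Sum>l = 1..2 * rho m. level_weight m l)
      = (\<Sum>l = 1..3 * r + 1. level_weight m l) + (\<Sum>l = 3 * r + 2..4 * r. level_weight m l)
        + (\<Sum>l = 4 * r + 1..4 * r + 2. level_weight m l)"
    using sum.ub_add_nat[of 1 "3 * r + 1" "level_weight m" "r + 1"]
      sum.ub_add_nat[of "3 * r + 2" "4 * r" "level_weight m" 2] \<open>r \<ge> 1\<close> r
    by (simp add: algebra_simps)
  also have "\<dots> = (\<Sum>l = 1..3 * r + 1. 2) + (\<Sum>l = 3 * r + 2..4 * r. -2) + (\<Sum>l = 4 * r + 1..4 * r + 2. -1)"
    by (intro arg_cong2[where f = "(+)"] sum.cong) (use \<open>r \<ge> 1\<close> in \<open>auto simp: level_weight_def r\<close>)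
  finally show ?thesis using r \<open>r \<ge> 1\<close> by (simp add: of_nat_diff)
qed

section \<open>Counting a residue class in an interval\<close>

lemma mod_eq_close_imp_eq:
  fixes x y p :: nat
  assumes "x mod p = y mod p" "x < y + p" "y < x + p"
  shows "x = y"
proof (rule ccontr)
  assume "x \<noteq> y"
  then consider "x < y" | "y < x" by linarith
  thus False
  proof cases
    case 1
    have "p dvd y - x" using assms(1) mod_eq_dvd_iff_nat[of x y p] 1 by simp
    hence "p \<le> y - x" using 1 by (intro dvd_imp_le) simp_all
    with assms(3) 1 show False by linarith
  next
    case 2
    have "p dvd x - y" using assms(1) mod_eq_dvd_iff_nat[of y x p] 2 by simp
    hence "p \<le> x - y" using 2 by (intro dvd_imp_le) simp_all
    with assms(2) 2 show False by linarith
  qed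
qed

lemma residue_class_short_interval:
  fixes a n p r :: nat
  assumes "n \<le> p"
  shows "card {s \<in> {a..<a + n}. s mod p = r} \<le> 1"
proof -
  have "\<forall>x\<in>{s \<in> {a..<a + n}. s mod p = r}. \<forall>y\<in>{s \<in> {a..<a + n}. s mod p = r}. x = y"
    using mod_eq_close_imp_eq[of _ p] assms by auto
  thus ?thesis by (simp add: card_le_Suc0_iff_eq)
qed

lemma residue_class_full_period:
  fixes a p r :: nat
  assumes "r < p"
  shows "card {s \<in> {a..<a + p}. s mod p = r} = 1"
proof -
  define s0 where "s0 = r + (if a mod p \<le> r then a div p else a div p + 1) * p"
  have "a = a div p * p + a mod p" "a mod p < p" using assms by simp_all
  hence "s0 \<in> {a..<a + p}"
  proof (cases "a mod p \<le> r")
    case True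
    hence "s0 = a div p * p + r" unfolding s0_def by simp
    thus ?thesis unfolding atLeastLessThan_iff using \<open>a = a div p * p + a mod p\<close> True assms by linarith
  next
    case False
    hence "s0 = a div p * p + p + r" unfolding s0_def by (simp add: algebra_simps)
    thus ?thesis unfolding atLeastLessThan_iff using \<open>a = a div p * p + a mod p\<close> \<open>a mod p < p\<close> False by linarith
  qed
  moreover have "s0 mod p = r" using assms unfolding s0_def by simp
  ultimately have "s0 \<in> {s \<in> {a..<a + p}. s mod p = r}" by simp
  hence "card {s \<in> {a..<a + p}. s mod p = r} \<noteq> 0" by (auto simp: card_eq_0_iff)
  thus ?thesis using residue_class_short_interval[of p p a r] by linarith
qed

lemma residue_class_interval:
  fixes a q p n r :: nat
  assumes "r < p" "n < p"
  shows "q \<le> card {s \<in> {a..<a + (q * p + n)}. s mod p = r}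
       \<and> card {s \<in> {a..<a + (q * p + n)}. s mod p = r} \<le> q + 1"
proof -
  have "card {s \<in> {a..<a + (q * p + n)}. s mod p = r} = q + card {s \<in> {a..<a + n}. s mod p = r}"
  proof (induction q)
    case (Suc q)
    have "{s \<in> {a..<a + (Suc q * p + n)}. s mod p = r}
        = {s \<in> {a..<a + (q * p + n)}. s mod p = r} \<union> {s \<in> {a + (q * p + n)..<a + (q * p + n) + p}. s mod p = r}"
      by (auto simp: algebra_simps)
    moreover have "card ({s \<in> {a..<a + (q * p + n)}. s mod p = r} \<union> {s \<in> {a + (q * p + n)..<a + (q * p + n) + p}. s mod p = r})
        = card {s \<in> {a..<a + (q * p + n)}. s mod p = r} + card {s \<in> {a + (q * p + n)..<a + (q * p + n) + p}. s mod p = r}"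
      by (rule card_Un_disjoint) auto
    ultimately show ?case using Suc residue_class_full_period[OF assms(1)] by simp
  qed simp
  thus ?thesis using residue_class_short_interval[of n p a r] assms by simp
qed

lemma sum_look_back:
  fixes f :: "nat \<Rightarrow> 'a::comm_monoid_add"
  assumes "k \<le> t"
  shows "(\<Sum>j = 1..k. f (t - j)) = (\<Sum>s \<in> {t - k..<t}. f s)"
proof (rule sum.reindex_bij_witness[of _ "\<lambda>s. t - s" "\<lambda>j. t - j"])
qed (use assms in auto)

lemma multiples_distinct_mod:
  fixes p q t N l1 l2 :: nat
  assumes "prime p" "prime q" "p \<noteq> q" "N < p" "N * q \<le> t" "l1 \<le> N" "l2 \<le> N"
    and "(t - l1 * q) mod p = (t - l2 * q) mod p"
  shows "l1 = l2"
proof -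
  have no_collision: "(t - u * q) mod p \<noteq> (t - v * q) mod p" if "u < v" "v \<le> N" for u v
  proof
    assume eq: "(t - u * q) mod p = (t - v * q) mod p"
    have "v * q \<le> t" using that assms(5) by (meson le_trans mult_le_mono1)
    have "u * q \<le> v * q" using that by simp
    hence "t - v * q \<le> t - u * q" by (rule diff_le_mono2)
    hence "p dvd (t - u * q) - (t - v * q)" using eq mod_eq_dvd_iff_nat by blast
    also have "(t - u * q) - (t - v * q) = (v - u) * q"
      using \<open>u * q \<le> v * q\<close> \<open>v * q \<le> t\<close> by (simp add: diff_mult_distrib)
    finally have "p dvd v - u"
      using assms(1-3) primes_dvd_imp_eq prime_dvd_mult_iff by blast
    hence "p \<le> v - u" using that by (intro dvd_imp_le) simp_all
    thus False using that assms(4) by linarith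
  qed
  show ?thesis using no_collision[of l1 l2] no_collision[of l2 l1] assms(6-8)
    by (metis linorder_neqE_nat)
qed

section \<open>The field of a periodic past\<close>

text \<open>The indicator of the residue class b mod p; it is the eventual (indeed exact)
  behaviour of the network.\<close>
definition residue_indicator :: "nat \<Rightarrow> nat \<Rightarrow> nat \<Rightarrow> int" where
  "residue_indicator p b s = of_bool (s mod p = b)"

lemma field_by_primes:
  fixes X :: "nat \<Rightarrow> int"
  assumes rho: "rho m \<ge> 1"
  shows "(\<Sum>j = 1..kk m. abar m j * X (t - j))
       = (\<Sum>q \<in> primes_between m. \<Sum>l = 1..2 * rho m. level_weight m l * X (t - l * q))"
proof -
  define P where "P = primes_between m"
  define L where "L = {1..2 * rho m}"
  define h where "h = (\<lambda>(q::nat, l::nat). l * q)"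
  have h_inj: "inj_on h (P \<times> L)"
  proof (rule inj_onI)
    fix x y assume "x \<in> P \<times> L" "y \<in> P \<times> L" "h x = h y"
    then obtain q l q' l' where xy: "x = (q, l)" "y = (q', l')" "q \<in> P" "l \<in> L" "q' \<in> P" "l' \<in> L"
      and eq: "l * q = l' * q'" unfolding h_def by auto
    have "l' < q" using xy double_rho_less_prime unfolding P_def L_def
      by (metis atLeastAtMost_iff le_less_trans)
    moreover have "0 < l" using xy(4) unfolding L_def by simp
    ultimately show "x = y"
      using small_multiple_unique[OF _ _ _ _ eq] xy primes_between_prime unfolding P_def by auto
  qed
  have h_range: "h ` (P \<times> L) \<subseteq> {1..kk m}"
  proof clarify
    fix q l assume "q \<in> P" "l \<in> L"
    hence "l \<le> 2 * rho m" "2 * rho m * q \<le> kk m" "1 \<le> l" "0 < q"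
      using multiples_within_memory primes_between_prime prime_gt_0_nat unfolding P_def L_def by auto
    hence "l * q \<le> kk m" "1 \<le> l * q" by (meson le_trans mult_le_mono1, simp)
    thus "h (q, l) \<in> {1..kk m}" unfolding h_def by simp
  qed
  have "(\<Sum>j = 1..kk m. abar m j * X (t - j)) = (\<Sum>j \<in> h ` (P \<times> L). abar m j * X (t - j))"
  proof (rule sum.mono_neutral_right[OF _ h_range])
    show "\<forall>j\<in>{1..kk m} - h ` (P \<times> L). abar m j * X (t - j) = 0"
      using abar_non_multiple[OF _ rho] unfolding P_def L_def h_def by force
  qed simp
  also have "\<dots> = (\<Sum>(q, l) \<in> P \<times> L. abar m (l * q) * X (t - l * q))"
    using sum.reindex[OF h_inj] unfolding h_def by (simp add: case_prod_beta)
  also have "\<dots> = (\<Sum>(q, l) \<in> P \<times> L. level_weight m l * X (t - l * q))"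
    by (rule sum.cong) (auto simp: P_def L_def abar_multiple rho)
  also have "\<dots> = (\<Sum>q \<in> P. \<Sum>l \<in> L. level_weight m l * X (t - l * q))"
    by (rule sum.cartesian_product[symmetric])
  finally show ?thesis unfolding P_def L_def .
qed

lemma own_prime_block:
  assumes "rho m \<ge> 2" "2 * rho m * p \<le> t"
  shows "(\<Sum>l = 1..2 * rho m. level_weight m l * residue_indicator p b (t - l * p))
       = 2 * int (rho m) * residue_indicator p b t"
proof -
  have "residue_indicator p b (t - l * p) = residue_indicator p b t" if "l \<in> {1..2 * rho m}" for l
  proof -
    have "l * p \<le> t" using that assms(2) by (meson atLeastAtMost_iff le_trans mult_le_mono1)
    hence "t mod p = (t - l * p) mod p" by (metis le_add_diff_inverse2 mod_mult_self1)
    thus ?thesis unfolding residue_indicator_def by simp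
  qed
  hence "(\<Sum>l = 1..2 * rho m. level_weight m l * residue_indicator p b (t - l * p))
       = (\<Sum>l = 1..2 * rho m. level_weight m l) * residue_indicator p b t"
    by (simp add: sum_distrib_right)
  thus ?thesis using level_weight_sum[OF assms(1)] by simp
qed

lemma other_prime_block:
  fixes b :: nat
  assumes p: "p \<in> primes_between m" and q: "q \<in> primes_between m" "q \<noteq> p"
    and t: "2 * rho m * q \<le> t"
  defines "B \<equiv> (\<Sum>l = 1..2 * rho m. level_weight m l * residue_indicator p b (t - l * q))"
  shows "B \<le> 2" and "t mod p = b \<Longrightarrow> B = 0"
proof -
  define H where "H = {l \<in> {1..2 * rho m}. (t - l * q) mod p = b}"
  have B_H: "B = (\<Sum>l \<in> H. level_weight m l)"
    unfolding B_def H_def residue_indicator_def by (simp add: Int_def)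
  have same: "l1 = l2" if "l1 \<le> 2 * rho m" "l2 \<le> 2 * rho m"
      "(t - l1 * q) mod p = (t - l2 * q) mod p" for l1 l2
    using multiples_distinct_mod[OF primes_between_prime[OF p] primes_between_prime[OF q(1)]
        q(2)[symmetric] double_rho_less_prime[OF p] _ that] t by (simp add: mult.commute)
  have "card H \<le> 1"
    using same unfolding H_def by (auto simp: card_le_Suc0_iff_eq)
  hence "B \<le> of_nat (card H) * 2"
    unfolding B_H by (intro sum_bounded_above level_weight_le_2)
  thus "B \<le> 2" using \<open>card H \<le> 1\<close> by linarith
  assume "t mod p = b"
  hence "H = {}" using same[of 0] unfolding H_def by fastforce
  thus "B = 0" unfolding B_H by simp
qed

lemma field_threshold:
  assumes rho: "rho m \<ge> 2" and p: "p \<in> primes_between m" and t: "kk m \<le> t"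
  shows "step ((\<Sum>j = 1..kk m. abar m j * residue_indicator p b (t - j)) - theta_bar m)
       = residue_indicator p b t"
proof -
  define P where "P = primes_between m"
  define B where "B q = (\<Sum>l = 1..2 * rho m. level_weight m l * residue_indicator p b (t - l * q))"
    for q
  have within: "2 * rho m * q \<le> t" if "q \<in> P" for q
    using multiples_within_memory that t unfolding P_def by (meson le_trans)
  have "(\<Sum>j = 1..kk m. abar m j * residue_indicator p b (t - j)) = B p + (\<Sum>q \<in> P - {p}. B q)"
    using field_by_primes[of m] rho sum.remove[OF finite_primes_between p]
    unfolding B_def P_def by simp
  also have "B p = 2 * int (rho m) * residue_indicator p b t"
    unfolding B_def using own_prime_block[OF rho] within p unfolding P_def by simp
  finally have field: "(\<Sum>j = 1..kk m. abar m j * residue_indicator p b (t - j))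
      = 2 * int (rho m) * residue_indicator p b t + (\<Sum>q \<in> P - {p}. B q)" .
  show ?thesis
  proof (cases "t mod p = b")
    case True
    have "(\<Sum>q \<in> P - {p}. B q) = 0"
      using other_prime_block(2)[OF p _ _ _ True] within unfolding B_def P_def
      by (intro sum.neutral) blast
    thus ?thesis using field True unfolding step_def theta_bar_def residue_indicator_def by simp
  next
    case False
    have "(\<Sum>q \<in> P - {p}. B q) \<le> of_nat (card (P - {p})) * 2"
      using other_prime_block(1)[OF p] within unfolding B_def P_def
      by (intro sum_bounded_above) blast
    also have "card (P - {p}) = rho m - 1"
      using p finite_primes_between unfolding P_def rho_def by simp
    finally have "(\<Sum>q \<in> P - {p}. B q) < 2 * int (rho m)" using rho by linarith
    thus ?thesis using field False unfolding step_def theta_bar_def residue_indicator_def by simp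
  qed
qed

section \<open>The network is periodic\<close>

lemma memory_division:
  assumes rho: "rho m \<ge> 2" and i: "i < rho m"
  shows "kk m = mu m i * pr m i + beta m i" "beta m i < pr m i" "1 \<le> mu m i"
proof -
  have p: "pr m i \<in> primes_between m" using pr_in_primes_between[OF i] .
  hence "0 < pr m i" using primes_between_prime prime_gt_0_nat by blast
  have beta: "beta m i = kk m mod pr m i"
    unfolding beta_def mu_def by (rule minus_mult_div_eq_mod)
  show "kk m = mu m i * pr m i + beta m i" unfolding beta mu_def by (rule div_mult_mod_eq[symmetric])
  show "beta m i < pr m i" unfolding beta using \<open>0 < pr m i\<close> by simp
  have "pr m i \<le> 2 * rho m * pr m i" using rho by simp
  hence "pr m i \<le> kk m" using multiples_within_memory[OF p] by linarith
  hence "pr m i div pr m i \<le> kk m div pr m i" by (rule div_le_mono)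
  thus "1 \<le> mu m i" unfolding mu_def using \<open>0 < pr m i\<close> by simp
qed

text \<open>The network x^{alpha_i} is exactly the indicator of the class beta_i mod p_i:
  its initial segment is so by definition, and the class reproduces itself.\<close>
lemma xa_periodic:
  assumes rho: "rho m \<ge> 2" and i: "i < rho m"
  shows "xa m i t = residue_indicator (pr m i) (beta m i) t"
proof (induction t rule: less_induct)
  case (less t)
  define p where "p = pr m i"
  note div = memory_division[OF rho i, folded p_def]
  show ?case
  proof (cases "t < kk m")
    case True
    have "(\<exists>l. l \<le> mu m i - 1 \<and> 1 \<le> mu m i \<and> t = beta m i + l * p) \<longleftrightarrow> t mod p = beta m i"
    proof
      assume "\<exists>l. l \<le> mu m i - 1 \<and> 1 \<le> mu m i \<and> t = beta m i + l * p"
      thus "t mod p = beta m i" using div(2) by auto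
    next
      assume tm: "t mod p = beta m i"
      hence t_eq: "t = beta m i + t div p * p" by (metis div_mult_mod_eq add.commute)
      hence "t div p * p < mu m i * p" using True div(1) by linarith
      hence "t div p \<le> mu m i - 1" by (simp add: less_imp_le_nat le_diff_conv2 div(3))
      thus "\<exists>l. l \<le> mu m i - 1 \<and> 1 \<le> mu m i \<and> t = beta m i + l * p" using t_eq div(3) by blast
    qed
    thus ?thesis using True unfolding p_def residue_indicator_def by (simp add: xa.simps[of m i t])
  next
    case False
    have "0 < kk m" using div by auto
    hence "xa m i (t - j) = residue_indicator p (beta m i) (t - j)" if "j \<in> {1..kk m}" for j
      using less.IH[of "t - j"] that False unfolding p_def by simp
    hence "xa m i t = step ((\<Sum>j = 1..kk m. abar m j * residue_indicator p (beta m i) (t - j)) - theta_bar m)"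
      using False by (simp add: xa.simps[of m i t])
    thus ?thesis using field_threshold[OF rho pr_in_primes_between[OF i]] False unfolding p_def by simp
  qed
qed

theorem lemma8:
  fixes m :: nat
  assumes "m \<ge> 1" and "rho m \<ge> 2"
  shows "\<forall>t i. t \<ge> kk m \<longrightarrow> i \<le> rho m - 1 \<longrightarrow>
           int (mu m i) \<le> (\<Sum>j = 1..kk m. xa m i (t - j)) \<and>
           (\<Sum>j = 1..kk m. xa m i (t - j)) \<le> 1 + int (mu m i)"
proof (intro allI impI)
  fix t i assume t: "kk m \<le> t" and "i \<le> rho m - 1"
  hence i: "i < rho m" using assms(2) by linarith
  define p b a where "p = pr m i" and "b = beta m i" and "a = t - kk m"
  note div = memory_division[OF assms(2) i, folded p_def b_def]
  have "(\<Sum>j = 1..kk m. xa m i (t - j)) = (\<Sum>s \<in> {t - kk m..<t}. residue_indicator p b s)"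
    using sum_look_back[OF t] xa_periodic[OF assms(2) i] unfolding p_def b_def by simp
  also have "\<dots> = int (card {s \<in> {a..<a + (mu m i * p + b)}. s mod p = b})"
    using t div(1) unfolding a_def residue_indicator_def by (simp add: Int_def)
  finally show "int (mu m i) \<le> (\<Sum>j = 1..kk m. xa m i (t - j)) \<and>
      (\<Sum>j = 1..kk m. xa m i (t - j)) \<le> 1 + int (mu m i)"
    using residue_class_interval[OF div(2) div(2), of "mu m i" a] by linarith
qed

end
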